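(* Let $n\ge1$, $0\le r\le n$ and $0\le k\le\binom{n-1}{r}$ be integers, let $X=[n]$, and let $\mathcal{A}\subseteq[n]^{(r)}$ be the initial segment of the colexicographic order of size $k$. For $1\le i\le n$ let $\mathcal{A}_{i,0}=\{B\in X_i^{(r-1)}: B\cup\{i\}\in\mathcal{A}\}$, $\mathcal{A}_{i,1}=\{B\in X_i^{(r)}: B\in\mathcal{A}\}$ and $A_i=X^{(\ge r+1)}\cup\mathcal{A}_{i,1}\cup\mathcal{A}_{i,0}\subseteq Q_n$. Then for distinct $i,j\in[n]$, $A_i$ and $A_j$ are isomorphic if and only if $\sigma(\mathcal{A})=\mathcal{A}$ for the transposition $\sigma=(ij)$.
   Context: $X_i=[n]\setminus\{i\}$; $Y^{(m)}$ denotes the $m$-subsets of $Y$ and $X^{(\ge m)}$ the subsets of size at least $m$. Colexicographic order: $A<_{colex}B$ iff $\max(A\Delta B)\in B$. For a permutation $\sigma$, $\sigma(\mathcal{A})=\{\{\sigma(b_1),\dots,\sigma(b_t)\}:\{b_1,\dots,b_t\}\in\mathcal{A}\}$. $Q_n$ is the hypercube on the power set of $[n]$ with metric $|x\Delta y|$; two subsets of $Q_n$ are isomorphic if related by an automorphism of $Q_n$ (a map $x\mapsto\tau(x)\Delta I$, $\tau$ a permutation of $[n]$, $I\subseteq[n]$). *)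

theory Defs
  imports "HOL-Combinatorics.Combinatorics"
begin

definition colex_less :: "nat set \<Rightarrow> nat set \<Rightarrow> bool" where
  "colex_less A B \<longleftrightarrow> A \<noteq> B \<and> Max ((A - B) \<union> (B - A)) \<in> B"

definition ksubsets :: "nat set \<Rightarrow> nat \<Rightarrow> nat set set" where
  "ksubsets Y m = {B. B \<subseteq> Y \<and> card B = m}"

definition ksubsets_ge :: "nat set \<Rightarrow> nat \<Rightarrow> nat set set" where
  "ksubsets_ge Y m = {B. B \<subseteq> Y \<and> m \<le> card B}"

definition colex_init :: "nat \<Rightarrow> nat \<Rightarrow> nat \<Rightarrow> nat set set" where
  "colex_init n r k = {S \<in> ksubsets {1..n} r.
      card {T \<in> ksubsets {1..n} r. colex_less T S} < k}"

text \<open>A_{i,0} = {B in X_i^(r-1) : B u {i} in A}  (empty when r = 0).\<close>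
definition A_i0 :: "nat \<Rightarrow> nat \<Rightarrow> nat set set \<Rightarrow> nat \<Rightarrow> nat set set" where
  "A_i0 n r \<A> i = {B. B \<subseteq> {1..n} - {i} \<and> card B + 1 = r \<and> insert i B \<in> \<A>}"

definition A_i1 :: "nat \<Rightarrow> nat \<Rightarrow> nat set set \<Rightarrow> nat \<Rightarrow> nat set set" where
  "A_i1 n r \<A> i = {B \<in> ksubsets ({1..n} - {i}) r. B \<in> \<A>}"

definition A_i :: "nat \<Rightarrow> nat \<Rightarrow> nat set set \<Rightarrow> nat \<Rightarrow> nat set set" where
  "A_i n r \<A> i = ksubsets_ge {1..n} (r + 1) \<union> A_i1 n r \<A> i \<union> A_i0 n r \<A> i"

definition cube_aut :: "(nat \<Rightarrow> nat) \<Rightarrow> nat set \<Rightarrow> nat set \<Rightarrow> nat set" where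
  "cube_aut \<tau> I x = ((\<tau> ` x) - I) \<union> (I - \<tau> ` x)"

definition cube_iso :: "nat \<Rightarrow> nat set set \<Rightarrow> nat set set \<Rightarrow> bool" where
  "cube_iso n A B \<longleftrightarrow> (\<exists>\<tau> I. \<tau> permutes {1..n} \<and> I \<subseteq> {1..n} \<and> cube_aut \<tau> I ` A = B)"

end

theory Submission
  imports Defs
begin

text \<open>
  For a family \<open>S\<close> of subsets of \<open>[n]\<close> and a coordinate \<open>l\<close>, the balance of \<open>S\<close> at \<open>l\<close>
  is the number of members avoiding \<open>l\<close> minus the number containing \<open>l\<close>. A cube automorphism
  \<open>x \<mapsto> \<tau>(x) \<Delta> I\<close> permutes the coordinates and negates the balances at the coordinates in
  \<open>I\<close>, so the sum of the absolute balances is an isomorphism invariant.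

  \<open>A\<^sub>i\<close> is the disjoint union of the sets of size at least \<open>r + 1\<close>, whose balance is
  \<open>-(n-1 choose r)\<close> at every coordinate, and of the injective image of \<open>\<A>\<close> under
  \<open>B \<mapsto> B - {i}\<close>, whose balances are at most \<open>|\<A>| \<le> (n-1 choose r)\<close>. So all balances of
  \<open>A\<^sub>i\<close> are nonpositive, and the invariant equals \<open>-\<Sum>x\<in>A\<^sub>i. n - 2|x|\<close>, which is a constant
  minus twice the number of members of \<open>\<A>\<close> containing \<open>i\<close>.

  Hence if \<open>A\<^sub>i\<close> and \<open>A\<^sub>j\<close> are isomorphic, \<open>i\<close> and \<open>j\<close> lie in equally many members of \<open>\<A>\<close>.
  For \<open>i < j\<close> the transposition \<open>(i j)\<close> moves a set containing \<open>j\<close> but not \<open>i\<close> down in colex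
  order, so it maps such members of the initial segment \<open>\<A>\<close> into the members containing \<open>i\<close> but
  not \<open>j\<close>; equal counts make this a bijection, and \<open>\<A>\<close> is \<open>(i j)\<close>-invariant. Conversely, if
  \<open>\<A>\<close> is \<open>(i j)\<close>-invariant, then \<open>(i j)\<close> itself maps \<open>A\<^sub>i\<close> onto \<open>A\<^sub>j\<close>.
\<close>

lemma finite_ksubsets: "finite Y \<Longrightarrow> finite (ksubsets Y m)"
  unfolding ksubsets_def by (rule finite_subset[of _ "Pow Y"]) auto

lemma finite_ksubsets_ge: "finite Y \<Longrightarrow> finite (ksubsets_ge Y m)"
  unfolding ksubsets_ge_def by (rule finite_subset[of _ "Pow Y"]) auto

lemma finite_ksubsets_elem: "finite Y \<Longrightarrow> S \<in> ksubsets Y m \<Longrightarrow> finite S"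
  unfolding ksubsets_def using finite_subset by auto

lemma image_ksubsets_permutes:
  assumes "\<sigma> permutes Y"
  shows "image \<sigma> ` ksubsets_ge Y m \<subseteq> ksubsets_ge Y m"
  and "image \<sigma> ` ksubsets Y m \<subseteq> ksubsets Y m"
proof -
  have "\<sigma> ` x \<subseteq> Y" "card (\<sigma> ` x) = card x" if "x \<subseteq> Y" for x
    using that permutes_image[OF assms] permutes_inj[OF assms]
    by (auto simp: card_image inj_on_subset)
  then show "image \<sigma> ` ksubsets_ge Y m \<subseteq> ksubsets_ge Y m"
    and "image \<sigma> ` ksubsets Y m \<subseteq> ksubsets Y m"
    unfolding ksubsets_ge_def ksubsets_def by auto
qed

lemma mem_iff_above_Max_sym_diff:
  assumes "finite A" "finite B" "Max ((A - B) \<union> (B - A)) < x"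
  shows "x \<in> A \<longleftrightarrow> x \<in> B"
proof (rule ccontr)
  assume "\<not> (x \<in> A \<longleftrightarrow> x \<in> B)"
  then have "x \<le> Max ((A - B) \<union> (B - A))" using assms(1,2) by (intro Max_ge) auto
  with assms(3) show False by simp
qed

lemma colex_less_trans:
  assumes "finite A" "finite B" "finite C" "colex_less A B" "colex_less B C"
  shows "colex_less A C"
proof -
  define m1 where "m1 = Max ((A - B) \<union> (B - A))"
  define m2 where "m2 = Max ((B - C) \<union> (C - B))"
  have m1: "m1 \<in> B - A" and m2: "m2 \<in> C - B"
    using assms Max_in[of "(A - B) \<union> (B - A)"] Max_in[of "(B - C) \<union> (C - B)"]
    unfolding colex_less_def m1_def m2_def by auto
  have above_m1: "x \<in> A \<longleftrightarrow> x \<in> B" if "m1 < x" for x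
    using that assms(1,2) mem_iff_above_Max_sym_diff unfolding m1_def by blast
  have above_m2: "x \<in> B \<longleftrightarrow> x \<in> C" if "m2 < x" for x
    using that assms(2,3) mem_iff_above_Max_sym_diff unfolding m2_def by blast
  define m where "m = max m1 m2"
  have m: "m \<in> C - A"
    using m1 m2 above_m1 above_m2 unfolding m_def by (cases m1 m2 rule: linorder_cases) auto
  have "Max ((A - C) \<union> (C - A)) = m"
  proof (rule Max_eqI)
    fix y assume "y \<in> (A - C) \<union> (C - A)"
    then show "y \<le> m"
      using above_m1 above_m2 unfolding m_def by (meson DiffE UnE max.strict_boundedE not_le)
  qed (use assms m in auto)
  then show ?thesis unfolding colex_less_def using m by auto
qed

lemma colex_less_total:
  assumes "finite A" "finite B" "A \<noteq> B"
  shows "colex_less A B \<or> colex_less B A"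
proof -
  have "Max ((A - B) \<union> (B - A)) \<in> (A - B) \<union> (B - A)"
    using assms by (intro Max_in) auto
  then show ?thesis unfolding colex_less_def using assms(3) by (auto simp: Un_commute)
qed

lemma colex_less_transpose:
  assumes "i < j" "j \<in> B" "i \<notin> B"
  shows "colex_less (transpose i j ` B) B"
proof -
  have "transpose i j ` B = insert i (B - {j})"
    using assms by (auto simp: transpose_def image_iff)
  then have "(transpose i j ` B - B) \<union> (B - transpose i j ` B) = {i, j}"
    using assms by auto
  then show ?thesis unfolding colex_less_def using assms by (auto simp: max_def)
qed

definition colex_rank :: "nat \<Rightarrow> nat \<Rightarrow> nat set \<Rightarrow> nat" where
  "colex_rank n r S = card {T \<in> ksubsets {1..n} r. colex_less T S}"

lemma colex_init_eq: "colex_init n r k = {S \<in> ksubsets {1..n} r. colex_rank n r S < k}"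
  unfolding colex_init_def colex_rank_def ..

lemma colex_rank_less:
  assumes "S \<in> ksubsets {1..n} r" "S' \<in> ksubsets {1..n} r" "colex_less S S'"
  shows "colex_rank n r S < colex_rank n r S'"
  unfolding colex_rank_def
proof (rule psubset_card_mono)
  have "colex_less T S'" if "T \<in> ksubsets {1..n} r" "colex_less T S" for T
    using colex_less_trans[OF _ _ _ that(2) assms(3)] finite_ksubsets_elem[of "{1..n}"] that assms
    by blast
  moreover have "\<not> colex_less S S"
    unfolding colex_less_def by simp
  ultimately show
    "{T \<in> ksubsets {1..n} r. colex_less T S} \<subset> {T \<in> ksubsets {1..n} r. colex_less T S'}"
    using assms by blast
qed (simp add: finite_ksubsets)

lemma card_colex_init_le: "card (colex_init n r k) \<le> k"
proof -
  have "inj_on (colex_rank n r) (colex_init n r k)"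
  proof (rule inj_onI)
    fix S S' assume "S \<in> colex_init n r k" "S' \<in> colex_init n r k"
      and "colex_rank n r S = colex_rank n r S'"
    then show "S = S'"
      using colex_less_total[of S S'] colex_rank_less[of S n r S'] colex_rank_less[of S' n r S]
        finite_ksubsets_elem[of "{1..n}"]
      unfolding colex_init_eq by fastforce
  qed
  moreover have "colex_rank n r ` colex_init n r k \<subseteq> {..<k}"
    unfolding colex_init_eq by auto
  ultimately show ?thesis
    by (metis card_inj_on_le card_lessThan finite_lessThan)
qed

lemma colex_init_downward_closed:
  assumes "S \<in> colex_init n r k" "T \<in> ksubsets {1..n} r" "colex_less T S"
  shows "T \<in> colex_init n r k"
  using assms colex_rank_less[OF assms(2) _ assms(3)] unfolding colex_init_eq by auto

lemma colex_init_transpose_closed: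
  assumes "i < j" "i \<in> {1..n}" "B \<in> colex_init n r k" "j \<in> B" "i \<notin> B"
  shows "transpose i j ` B \<in> colex_init n r k"
proof (rule colex_init_downward_closed[OF assms(3) _ colex_less_transpose[OF assms(1,4,5)]])
  have "B \<in> ksubsets {1..n} r" using assms(3) unfolding colex_init_def by blast
  moreover from this have "j \<in> {1..n}" using assms(4) unfolding ksubsets_def by blast
  ultimately show "transpose i j ` B \<in> ksubsets {1..n} r"
    using image_ksubsets_permutes(2)[OF permutes_swap_id[OF assms(2) \<open>j \<in> {1..n}\<close>]] by blast
qed

lemma image_transpose_twice [simp]: "transpose i j ` transpose i j ` B = B"
  by (simp add: image_image)

lemma inj_image_transpose: "inj (image (transpose i j))"
  using inj_on_image_Pow[OF inj_transpose, of i j] by simp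

lemma image_transpose_eq_if_subset:
  assumes "image (transpose i j) ` \<S> \<subseteq> \<S>"
  shows "image (transpose i j) ` \<S> = \<S>"
proof
  show "\<S> \<subseteq> image (transpose i j) ` \<S>"
  proof
    fix B assume "B \<in> \<S>"
    then have "transpose i j ` transpose i j ` B \<in> image (transpose i j) ` \<S>"
      using assms by blast
    then show "B \<in> image (transpose i j) ` \<S>" by simp
  qed
qed (fact assms)

lemma image_transpose_eq_if_shift_closed:
  assumes "finite \<A>"
    and shift: "\<And>B. B \<in> \<A> \<Longrightarrow> j \<in> B \<Longrightarrow> i \<notin> B \<Longrightarrow> transpose i j ` B \<in> \<A>"
    and same_degree: "card {B \<in> \<A>. i \<in> B} = card {B \<in> \<A>. j \<in> B}"
  shows "image (transpose i j) ` \<A> = \<A>"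
proof -
  define \<sigma> where "\<sigma> = transpose i j"
  define \<A>i where "\<A>i = {B \<in> \<A>. i \<in> B \<and> j \<notin> B}"
  define \<A>j where "\<A>j = {B \<in> \<A>. j \<in> B \<and> i \<notin> B}"
  define \<A>ij where "\<A>ij = {B \<in> \<A>. i \<in> B \<and> j \<in> B}"
  have finite_parts: "finite \<A>i" "finite \<A>j" "finite \<A>ij"
    using \<open>finite \<A>\<close> unfolding \<A>i_def \<A>j_def \<A>ij_def by simp_all
  have "{B \<in> \<A>. i \<in> B} = \<A>i \<union> \<A>ij" "\<A>i \<inter> \<A>ij = {}"
    "{B \<in> \<A>. j \<in> B} = \<A>j \<union> \<A>ij" "\<A>j \<inter> \<A>ij = {}"
    unfolding \<A>i_def \<A>j_def \<A>ij_def by blast+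
  then have "card \<A>i + card \<A>ij = card \<A>j + card \<A>ij"
    using same_degree finite_parts card_Un_disjoint by metis
  moreover have "image \<sigma> ` \<A>j \<subseteq> \<A>i"
  proof
    fix C assume "C \<in> image \<sigma> ` \<A>j"
    then obtain B where "B \<in> \<A>" "j \<in> B" "i \<notin> B" "C = \<sigma> ` B"
      unfolding \<A>j_def by blast
    moreover have "i \<in> \<sigma> ` B" "j \<notin> \<sigma> ` B"
      using calculation unfolding \<sigma>_def by (auto simp: in_transpose_image_iff)
    ultimately show "C \<in> \<A>i"
      using shift unfolding \<A>i_def \<sigma>_def by blast
  qed
  moreover have "card (image \<sigma> ` \<A>j) = card \<A>j"
    unfolding \<sigma>_def using inj_image_transpose by (rule card_image[OF inj_on_subset]) simp
  ultimately have \<A>j_onto_\<A>i: "image \<sigma> ` \<A>j = \<A>i"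
    using \<open>finite \<A>\<close> by (intro card_subset_eq) (auto simp: \<A>i_def)
  have "\<sigma> ` B \<in> \<A>" if B: "B \<in> \<A>" for B
  proof -
    consider "B \<in> \<A>j" | "B \<in> \<A>i" | "i \<in> B \<longleftrightarrow> j \<in> B"
      using B unfolding \<A>i_def \<A>j_def by blast
    then show ?thesis
    proof cases
      case 1
      then show ?thesis using \<A>j_onto_\<A>i unfolding \<A>i_def by blast
    next
      case 2
      then obtain B' where "B' \<in> \<A>j" "B = \<sigma> ` B'" using \<A>j_onto_\<A>i by blast
      then show ?thesis unfolding \<A>j_def \<sigma>_def by simp
    qed (use B in \<open>simp add: \<sigma>_def\<close>)
  qed
  then have "image \<sigma> ` \<A> \<subseteq> \<A>" by blast
  then show ?thesis unfolding \<sigma>_def by (rule image_transpose_eq_if_subset)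
qed

lemma colex_init_transpose_eq:
  assumes "i \<in> {1..n}" "j \<in> {1..n}"
    and "card {B \<in> colex_init n r k. i \<in> B} = card {B \<in> colex_init n r k. j \<in> B}"
  shows "image (transpose i j) ` colex_init n r k = colex_init n r k"
proof -
  have "finite (colex_init n r k)"
    using finite_ksubsets[of "{1..n}" r] unfolding colex_init_def by simp
  consider "i < j" | "i = j" | "j < i" by linarith
  then show ?thesis
  proof cases
    case 1
    show ?thesis
      using image_transpose_eq_if_shift_closed[OF \<open>finite (colex_init n r k)\<close>
          colex_init_transpose_closed[OF 1 assms(1)] assms(3)] .
  next
    case 3
    show ?thesis
      using image_transpose_eq_if_shift_closed[OF \<open>finite (colex_init n r k)\<close>
          colex_init_transpose_closed[OF 3 assms(2)] assms(3)[symmetric]]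
      by (simp add: transpose_commute)
  qed simp
qed

definition coord_balance :: "nat \<Rightarrow> nat set set \<Rightarrow> int" where
  "coord_balance l S = (\<Sum>x\<in>S. if l \<in> x then -1 else 1)"

definition balance_norm :: "nat \<Rightarrow> nat set set \<Rightarrow> int" where
  "balance_norm n S = (\<Sum>l\<in>{1..n}. \<bar>coord_balance l S\<bar>)"

lemma balance_norm_cube_aut:
  assumes "\<tau> permutes {1..n}"
  shows "balance_norm n (cube_aut \<tau> I ` S) = balance_norm n S"
proof -
  have "inj \<tau>" using permutes_inj[OF assms] .
  have "inj (cube_aut \<tau> I)"
  proof (rule injI)
    fix x y assume "cube_aut \<tau> I x = cube_aut \<tau> I y"
    then have "\<tau> ` x = \<tau> ` y" unfolding cube_aut_def by blast
    then show "x = y" using \<open>inj \<tau>\<close> by (simp add: inj_image_eq_iff)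
  qed
  have flip: "\<bar>coord_balance (\<tau> l) (cube_aut \<tau> I ` S)\<bar> = \<bar>coord_balance l S\<bar>" for l
  proof -
    have "coord_balance (\<tau> l) (cube_aut \<tau> I ` S)
        = (\<Sum>x\<in>S. if \<tau> l \<in> cube_aut \<tau> I x then -1 else 1)"
      unfolding coord_balance_def
      using sum.reindex[OF inj_on_subset[OF \<open>inj (cube_aut \<tau> I)\<close>]] by simp
    also have "\<dots> = (\<Sum>x\<in>S. (if \<tau> l \<in> I then -1 else 1) * (if l \<in> x then -1 else 1))"
      using \<open>inj \<tau>\<close> by (intro sum.cong) (auto simp: cube_aut_def inj_image_mem_iff)
    also have "\<dots> = (if \<tau> l \<in> I then -1 else 1) * coord_balance l S"
      unfolding coord_balance_def by (simp add: sum_distrib_left)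
    finally show ?thesis by (simp add: abs_mult)
  qed
  have "balance_norm n (cube_aut \<tau> I ` S)
      = (\<Sum>l\<in>{1..n}. \<bar>coord_balance (\<tau> l) (cube_aut \<tau> I ` S)\<bar>)"
    unfolding balance_norm_def
    using sum.reindex_bij_betw[OF permutes_imp_bij[OF assms],
        of "\<lambda>l. \<bar>coord_balance l (cube_aut \<tau> I ` S)\<bar>"] by simp
  also have "\<dots> = balance_norm n S"
    unfolding balance_norm_def flip ..
  finally show ?thesis .
qed

lemma coord_balance_eq_card:
  "finite S \<Longrightarrow> coord_balance l S = int (card {x \<in> S. l \<notin> x}) - int (card {x \<in> S. l \<in> x})"
  unfolding coord_balance_def by (simp add: sum.If_cases Int_def conj_commute)

lemma coord_balance_le_card: "coord_balance l S \<le> int (card S)"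
proof -
  have "coord_balance l S \<le> of_nat (card S) * 1"
    unfolding coord_balance_def by (rule sum_bounded_above) simp
  then show ?thesis by simp
qed

lemma sum_coord_balance:
  assumes "finite Y" "\<And>x. x \<in> S \<Longrightarrow> x \<subseteq> Y"
  shows "(\<Sum>l\<in>Y. coord_balance l S) = (\<Sum>x\<in>S. int (card Y) - 2 * int (card x))"
proof -
  have "(\<Sum>l\<in>Y. if l \<in> x then -1 else 1) = int (card Y) - 2 * int (card x)" if "x \<in> S" for x
  proof -
    have "x \<subseteq> Y" using assms(2) that .
    moreover from this have "finite x" using \<open>finite Y\<close> by (rule finite_subset)
    ultimately have "card (Y \<inter> x) = card x" "card (Y - x) = card Y - card x" "card x \<le> card Y"
      using \<open>finite Y\<close> by (simp_all add: Int_absorb1 card_Diff_subset card_mono)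
    then show ?thesis
      using \<open>finite Y\<close> by (simp add: sum.If_cases Diff_eq)
  qed
  then show ?thesis
    unfolding coord_balance_def by (subst sum.swap) (rule sum.cong, simp_all)
qed

lemma coord_balance_ksubsets_ge:
  assumes "finite Y" "l \<in> Y"
  shows "coord_balance l (ksubsets_ge Y (Suc r)) = - int (card (Y - {l}) choose r)"
proof -
  define Y' where "Y' = Y - {l}"
  have "finite Y'" using assms(1) unfolding Y'_def by simp
  have without_l: "{x \<in> ksubsets_ge Y (Suc r). l \<notin> x} = ksubsets_ge Y' (Suc r)"
    unfolding ksubsets_ge_def Y'_def by auto
  have "bij_betw (\<lambda>x. x - {l}) {x \<in> ksubsets_ge Y (Suc r). l \<in> x} (ksubsets_ge Y' r)"
  proof (rule bij_betw_byWitness[where f' = "insert l"])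
    show "(\<lambda>x. x - {l}) ` {x \<in> ksubsets_ge Y (Suc r). l \<in> x} \<subseteq> ksubsets_ge Y' r"
    proof (rule image_subsetI)
      fix x assume "x \<in> {x \<in> ksubsets_ge Y (Suc r). l \<in> x}"
      moreover then have "finite x" using assms(1) finite_subset unfolding ksubsets_ge_def by auto
      ultimately show "x - {l} \<in> ksubsets_ge Y' r" unfolding ksubsets_ge_def Y'_def by auto
    qed
    show "insert l ` ksubsets_ge Y' r \<subseteq> {x \<in> ksubsets_ge Y (Suc r). l \<in> x}"
    proof (rule image_subsetI)
      fix x assume "x \<in> ksubsets_ge Y' r"
      moreover then have "finite x" "l \<notin> x"
        using \<open>finite Y'\<close> finite_subset unfolding ksubsets_ge_def Y'_def by auto
      ultimately show "insert l x \<in> {x \<in> ksubsets_ge Y (Suc r). l \<in> x}"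
        using assms(2) unfolding ksubsets_ge_def Y'_def by auto
    qed
  qed (auto simp: ksubsets_ge_def Y'_def)
  moreover have "ksubsets_ge Y' r = ksubsets_ge Y' (Suc r) \<union> ksubsets Y' r"
    "ksubsets_ge Y' (Suc r) \<inter> ksubsets Y' r = {}"
    unfolding ksubsets_ge_def ksubsets_def by auto
  ultimately have with_l:
    "card {x \<in> ksubsets_ge Y (Suc r). l \<in> x} = card (ksubsets_ge Y' (Suc r)) + card (ksubsets Y' r)"
    using \<open>finite Y'\<close>
    by (simp add: bij_betw_same_card card_Un_disjoint finite_ksubsets finite_ksubsets_ge)
  have "card (ksubsets Y' r) = card Y' choose r"
    unfolding ksubsets_def using \<open>finite Y'\<close> by (rule n_subsets)
  then show ?thesis
    using coord_balance_eq_card[OF finite_ksubsets_ge[OF assms(1)]] without_l with_l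
    unfolding Y'_def by simp
qed

lemma inj_on_Diff_singleton_ksubsets:
  assumes "finite Y" "\<A> \<subseteq> ksubsets Y r"
  shows "inj_on (\<lambda>B. B - {i}) \<A>"
proof (rule inj_onI)
  fix B B' assume "B \<in> \<A>" "B' \<in> \<A>" and eq: "B - {i} = B' - {i}"
  then have "B \<in> ksubsets Y r" "B' \<in> ksubsets Y r" using assms(2) by blast+
  then have "finite B" "finite B'" "card B = card B'"
    using finite_ksubsets_elem[OF assms(1)] by (auto simp only: ksubsets_def mem_Collect_eq)
  moreover have "card (B - {i}) < card B \<longleftrightarrow> i \<in> B" "card (B' - {i}) < card B' \<longleftrightarrow> i \<in> B'"
    using \<open>finite B\<close> \<open>finite B'\<close> by (simp_all add: card_Diff1_less_iff)
  ultimately have "i \<in> B \<longleftrightarrow> i \<in> B'"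
    using eq by simp
  then show "B = B'" using eq by blast
qed

lemma A_i_eq:
  assumes "\<A> \<subseteq> ksubsets {1..n} r"
  shows "A_i n r \<A> i = ksubsets_ge {1..n} (r + 1) \<union> (\<lambda>B. B - {i}) ` \<A>"
proof -
  have "A_i1 n r \<A> i = {B \<in> \<A>. i \<notin> B}"
    using assms unfolding A_i1_def ksubsets_def by auto
  moreover have "A_i0 n r \<A> i = (\<lambda>B. B - {i}) ` {B \<in> \<A>. i \<in> B}"
  proof (intro equalityI subsetI)
    fix x assume "x \<in> A_i0 n r \<A> i"
    then have "insert i x \<in> \<A>" "x = insert i x - {i}" unfolding A_i0_def by blast+
    then show "x \<in> (\<lambda>B. B - {i}) ` {B \<in> \<A>. i \<in> B}" by blast
  next
    fix x assume "x \<in> (\<lambda>B. B - {i}) ` {B \<in> \<A>. i \<in> B}"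
    then obtain B where B: "B \<in> \<A>" "i \<in> B" "x = B - {i}" by blast
    then have "B \<in> ksubsets {1..n} r" using assms by blast
    then have "B \<subseteq> {1..n}" "card B = r" "finite B"
      using finite_ksubsets_elem[OF finite_atLeastAtMost] unfolding ksubsets_def by blast+
    have "x \<subseteq> {1..n} - {i}" using B \<open>B \<subseteq> {1..n}\<close> by blast
    moreover have "card x + 1 = r"
      using card.remove[OF \<open>finite B\<close> B(2)] B(3) \<open>card B = r\<close> by simp
    moreover have "insert i x \<in> \<A>" using B by (simp add: insert_absorb)
    ultimately show "x \<in> A_i0 n r \<A> i"
      unfolding A_i0_def by blast
  qed
  moreover have "(\<lambda>B. B - {i}) ` \<A>
      = (\<lambda>B. B - {i}) ` {B \<in> \<A>. i \<notin> B} \<union> (\<lambda>B. B - {i}) ` {B \<in> \<A>. i \<in> B}"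
    by blast
  moreover have "(\<lambda>B. B - {i}) ` {B \<in> \<A>. i \<notin> B} = {B \<in> \<A>. i \<notin> B}"
    by (simp add: image_cong[of _ _ _ "\<lambda>B. B"])
  ultimately show ?thesis unfolding A_i_def by (simp add: Un_assoc)
qed

lemma ksubsets_ge_disjoint_Diff_singleton:
  assumes "\<A> \<subseteq> ksubsets Y r"
  shows "ksubsets_ge Y (r + 1) \<inter> (\<lambda>B. B - {i}) ` \<A> = {}"
proof -
  have "card (B - {i}) < r + 1" if "B \<in> \<A>" for B
    using that assms card_Diff1_le[of B i] unfolding ksubsets_def by auto
  then show ?thesis unfolding ksubsets_ge_def by (auto simp: not_le[symmetric])
qed

lemma A_i_transpose:
  assumes "i \<in> {1..n}" "j \<in> {1..n}" "\<A> \<subseteq> ksubsets {1..n} r"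
  shows "image (transpose i j) ` A_i n r \<A> i = A_i n r (image (transpose i j) ` \<A>) j"
proof -
  define \<sigma> where "\<sigma> = transpose i j"
  have perm: "\<sigma> permutes {1..n}" unfolding \<sigma>_def using assms(1,2) by (rule permutes_swap_id)
  have "image \<sigma> ` A_i n r \<A> i
      = image \<sigma> ` ksubsets_ge {1..n} (r + 1) \<union> image \<sigma> ` (\<lambda>B. B - {i}) ` \<A>"
    unfolding A_i_eq[OF assms(3)] by (rule image_Un)
  also have "image \<sigma> ` ksubsets_ge {1..n} (r + 1) = ksubsets_ge {1..n} (r + 1)"
    using image_ksubsets_permutes(1)[OF perm] unfolding \<sigma>_def
    by (rule image_transpose_eq_if_subset)
  also have "image \<sigma> ` (\<lambda>B. B - {i}) ` \<A> = (\<lambda>B. B - {j}) ` image \<sigma> ` \<A>"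
    unfolding \<sigma>_def by (auto simp: image_image image_set_diff[OF inj_transpose])
  also have "ksubsets_ge {1..n} (r + 1) \<union> (\<lambda>B. B - {j}) ` image \<sigma> ` \<A>
      = A_i n r (image \<sigma> ` \<A>) j"
    using image_ksubsets_permutes(2)[OF perm] assms(3) by (subst A_i_eq) auto
  finally show ?thesis unfolding \<sigma>_def .
qed

lemma coord_balance_A_i_nonpos:
  assumes "\<A> \<subseteq> ksubsets {1..n} r" "card \<A> \<le> (n - 1) choose r" "l \<in> {1..n}"
  shows "coord_balance l (A_i n r \<A> i) \<le> 0"
proof -
  have "finite \<A>" using assms(1) finite_ksubsets[of "{1..n}"] by (simp add: finite_subset)
  have "coord_balance l (A_i n r \<A> i)
      = coord_balance l (ksubsets_ge {1..n} (r + 1)) + coord_balance l ((\<lambda>B. B - {i}) ` \<A>)"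
    unfolding A_i_eq[OF assms(1)] coord_balance_def
    using ksubsets_ge_disjoint_Diff_singleton[OF assms(1)] \<open>finite \<A>\<close>
    by (simp add: sum.union_disjoint finite_ksubsets_ge)
  also have "coord_balance l (ksubsets_ge {1..n} (r + 1)) = - int ((n - 1) choose r)"
    using coord_balance_ksubsets_ge[of "{1..n}" l r] assms(3) by simp
  also have "coord_balance l ((\<lambda>B. B - {i}) ` \<A>) \<le> int (card \<A>)"
    using coord_balance_le_card card_image_le[OF \<open>finite \<A>\<close>] by (meson of_nat_le_iff order_trans)
  finally show ?thesis using assms(2) by simp
qed

lemma balance_norm_A_i:
  assumes "\<A> \<subseteq> ksubsets {1..n} r" "card \<A> \<le> (n - 1) choose r"
  shows "balance_norm n (A_i n r \<A> i)
    = - (\<Sum>x\<in>ksubsets_ge {1..n} (r + 1). int n - 2 * int (card x))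
      - int (card \<A>) * (int n - 2 * int r) - 2 * int (card {B \<in> \<A>. i \<in> B})"
proof -
  define w where "w x = int n - 2 * int (card x)" for x :: "nat set"
  have "finite \<A>" using assms(1) finite_ksubsets[of "{1..n}"] by (simp add: finite_subset)
  have "balance_norm n (A_i n r \<A> i) = - (\<Sum>l\<in>{1..n}. coord_balance l (A_i n r \<A> i))"
    unfolding balance_norm_def sum_negf[symmetric]
    using coord_balance_A_i_nonpos[OF assms] by (intro sum.cong) auto
  also have "\<dots> = - (\<Sum>x\<in>A_i n r \<A> i. w x)"
    unfolding w_def
    by (subst sum_coord_balance) (auto simp: A_i_def ksubsets_ge_def A_i1_def A_i0_def ksubsets_def)
  also have "\<dots> = - (\<Sum>x\<in>ksubsets_ge {1..n} (r + 1). w x) - (\<Sum>B\<in>\<A>. w (B - {i}))"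
    unfolding A_i_eq[OF assms(1)]
    using ksubsets_ge_disjoint_Diff_singleton[OF assms(1)] \<open>finite \<A>\<close>
      sum.reindex[OF inj_on_Diff_singleton_ksubsets[OF _ assms(1)], of w]
    by (simp add: sum.union_disjoint finite_ksubsets_ge)
  also have "(\<Sum>B\<in>\<A>. w (B - {i})) = (\<Sum>B\<in>\<A>. (int n - 2 * int r) + (if i \<in> B then 2 else 0))"
  proof (rule sum.cong)
    fix B assume "B \<in> \<A>"
    then have "B \<in> ksubsets {1..n} r" using assms(1) by blast
    then have "finite B" "card B = r"
      using finite_ksubsets_elem[of "{1..n}"]
      by (auto simp only: ksubsets_def mem_Collect_eq finite_atLeastAtMost)
    show "w (B - {i}) = (int n - 2 * int r) + (if i \<in> B then 2 else 0)"
    proof (cases "i \<in> B")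
      case True
      then have "card B = Suc (card (B - {i}))" using card.remove[OF \<open>finite B\<close>] by blast
      then show ?thesis unfolding w_def using True \<open>card B = r\<close> by simp
    qed (simp add: w_def \<open>card B = r\<close>)
  qed simp
  also have "\<dots> = int (card \<A>) * (int n - 2 * int r) + 2 * int (card {B \<in> \<A>. i \<in> B})"
    using \<open>finite \<A>\<close> by (simp add: sum.distrib sum.If_cases Int_def conj_commute)
  finally show ?thesis unfolding w_def by simp
qed

theorem lemma9:
  fixes n r k i j :: nat
  assumes "1 \<le> n" and "r \<le> n" and "k \<le> (n - 1) choose r"
    and "i \<in> {1..n}" and "j \<in> {1..n}" and "i \<noteq> j"
  shows "cube_iso n (A_i n r (colex_init n r k) i) (A_i n r (colex_init n r k) j)
     \<longleftrightarrow> (image (transpose i j)) ` (colex_init n r k) = colex_init n r k"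
proof -
  let ?\<A> = "colex_init n r k"
  have sub: "?\<A> \<subseteq> ksubsets {1..n} r" unfolding colex_init_def by blast
  have card: "card ?\<A> \<le> (n - 1) choose r" using card_colex_init_le assms(3) by (rule le_trans)
  show ?thesis
  proof
    assume "cube_iso n (A_i n r ?\<A> i) (A_i n r ?\<A> j)"
    then obtain \<tau> I where "\<tau> permutes {1..n}" "cube_aut \<tau> I ` A_i n r ?\<A> i = A_i n r ?\<A> j"
      unfolding cube_iso_def by blast
    then have "balance_norm n (A_i n r ?\<A> i) = balance_norm n (A_i n r ?\<A> j)"
      using balance_norm_cube_aut by metis
    then have "card {B \<in> ?\<A>. i \<in> B} = card {B \<in> ?\<A>. j \<in> B}"
      unfolding balance_norm_A_i[OF sub card] by simp
    then show "image (transpose i j) ` ?\<A> = ?\<A>"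
      using colex_init_transpose_eq assms(4,5) by blast
  next
    assume "image (transpose i j) ` ?\<A> = ?\<A>"
    then have "cube_aut (transpose i j) {} ` A_i n r ?\<A> i = A_i n r ?\<A> j"
      using A_i_transpose[OF assms(4,5) sub] by (simp add: cube_aut_def)
    then show "cube_iso n (A_i n r ?\<A> i) (A_i n r ?\<A> j)"
      unfolding cube_iso_def using permutes_swap_id[OF assms(4,5)] by blast
  qed
qed

end
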